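(* For every $m\in\mathbb{N}_0$ and every real $t$ with $|t|<1$, \[ \frac{(\operatorname{arcsinh} t)^{m}}{\sqrt{1+t^2}}=t^m\left[1+\sum_{k=1}^{\infty}\frac{Q(m+1,2k;2)}{\binom{m+2k}{m}}\frac{(2t)^{2k}}{(2k)!}\right]. \]
   Context: $s(n,k)$ denotes the signed Stirling numbers of the first kind, defined by $\frac{[\ln(1+x)]^k}{k!}=\sum_{n=k}^\infty s(n,k)\frac{x^n}{n!}$ for $|x|<1$; equivalently $\prod_{j=0}^{n-1}(z-j)=\sum_{k=0}^n s(n,k)z^k$. For $m\in\mathbb{N}$, $k\in\mathbb{N}_0$ and $\alpha\in\mathbb{R}$ define \[ Q(m,k;\alpha)=\sum_{\ell=0}^{k}\binom{m+\ell-1}{m-1}\, s(m+k-1,m+\ell-1)\left(\frac{m+k-\alpha}{2}\right)^{\ell}, \] with the convention $0^0=1$. *)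

theory Defs
  imports "HOL-Analysis.Analysis" "HOL-Combinatorics.Stirling"
begin

text \<open>Signed Stirling numbers of the first kind s(n,k): the library's stirling n k is the
unsigned version, and s(n,k) = (-1)^(n-k) times it.\<close>
definition stirling1s :: "nat \<Rightarrow> nat \<Rightarrow> real" where
  "stirling1s n k = (-1) ^ (n - k) * real (stirling n k)"

text \<open>Q(m,k;alpha) for m >= 1, with 0^0 = 1 (Isabelle's x^0 = 1).\<close>
definition Qfun :: "nat \<Rightarrow> nat \<Rightarrow> real \<Rightarrow> real" where
  "Qfun m k \<alpha> = (\<Sum>l\<le>k. real ((m + l - 1) choose (m - 1))
      * stirling1s (m + k - 1) (m + l - 1) * ((real (m + k) - \<alpha>) / 2) ^ l)"

end

theory Submission
  imports Defs "HOL-Computational_Algebra.Polynomial"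
begin

(*
  The numbers c_m(N) = m! [x^m] P_N(x) / N!, where P_N(x) = prod_{j<N} (x + N - 1 - 2j), are the
  Taylor coefficients of arsinh(t)^m / sqrt(1 + t^2); they come from the expansion
  exp(x arsinh t) / sqrt(1 + t^2) = sum_N P_N(x) t^N / N!.  Instead of proving that expansion we
  use P_(N+2) = (x^2 - (N+1)^2) P_N.  The resulting recursion for c_m(N) shows that c_m(N) grows
  only polynomially in N, so f_m = sum_N c_m(N) t^N converges for |t| < 1, and that
  (1 + t^2) f_m'' + 3 t f_m' + f_m = m (m - 1) f_(m-2).  By induction on m, first
  (1 + t^2) f_m' + t f_m - m arsinh^(m-1) and then sqrt(1 + t^2) f_m - arsinh^m have zero
  derivative and vanish at 0, hence f_m = arsinh^m / sqrt(1 + t^2).  Only the terms N = m + 2k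
  are nonzero, and writing P_N(x) = 2^N ((x + N - 1) / 2)^(falling N) via Stirling numbers of the
  first kind identifies c_m(m + 2k) with the coefficients in the theorem.
*)

section \<open>Power series with polynomially bounded coefficients\<close>

definition poly_bounded :: "(nat \<Rightarrow> real) \<Rightarrow> bool" where
  "poly_bounded c \<longleftrightarrow> (\<exists>C p. \<forall>n. \<bar>c n\<bar> \<le> C * (real n + 1)^p)"

lemma poly_bounded_diffs:
  assumes "poly_bounded c"
  shows "poly_bounded (diffs c)"
proof -
  obtain C p where Cp: "\<And>n. \<bar>c n\<bar> \<le> C * (real n + 1)^p"
    using assms by (auto simp: poly_bounded_def)
  have "C \<ge> 0"
    using Cp[of 0] by simp
  have "\<bar>diffs c n\<bar> \<le> (C * 2^p) * (real n + 1)^(Suc p)" for n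
  proof -
    have "\<bar>diffs c n\<bar> = (real n + 1) * \<bar>c (Suc n)\<bar>"
      by (simp add: diffs_def abs_mult add.commute)
    also have "\<dots> \<le> (real n + 1) * (C * (real (Suc n) + 1)^p)"
      using Cp[of "Suc n"] by (intro mult_left_mono) auto
    also have "\<dots> \<le> (real n + 1) * (C * (2 * (real n + 1))^p)"
      using \<open>C \<ge> 0\<close> by (intro mult_left_mono power_mono) auto
    also have "\<dots> = (C * 2^p) * (real n + 1)^(Suc p)"
      by (subst power_mult_distrib) (simp add: mult_ac)
    finally show ?thesis .
  qed
  then show ?thesis
    unfolding poly_bounded_def by blast
qed

lemma summable_poly_times_geometric:
  fixes x :: real
  assumes "\<bar>x\<bar> < 1"
  shows "summable (\<lambda>n. (real n + 1)^p * x^n)"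
  using assms
proof (induction p arbitrary: x)
  case 0
  then show ?case
    by (simp add: summable_geometric)
next
  case (Suc p)
  have "summable (\<lambda>n. diffs (\<lambda>n. (real n + 1)^p) n * \<bar>x\<bar>^n)"
    by (rule termdiff_converges[of "\<bar>x\<bar>" 1]) (use Suc in auto)
  then show ?case
  proof (rule summable_comparison_test'[where N = 0])
    fix n :: nat
    have "(real n + 1)^p \<le> (real (Suc n) + 1)^p"
      by (intro power_mono) auto
    then have "(real n + 1)^Suc p * \<bar>x\<bar>^n \<le> real (Suc n) * (real (Suc n) + 1)^p * \<bar>x\<bar>^n"
      by (intro mult_right_mono) (auto simp: add.commute)
    then show "norm ((real n + 1)^Suc p * x^n) \<le> diffs (\<lambda>n. (real n + 1)^p) n * \<bar>x\<bar>^n"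
      by (simp add: diffs_def abs_mult power_abs)
  qed
qed

lemma summable_if_poly_bounded:
  assumes "poly_bounded c" "\<bar>x\<bar> < 1"
  shows "summable (\<lambda>n. c n * x^n)"
proof -
  obtain C p where Cp: "\<And>n. \<bar>c n\<bar> \<le> C * (real n + 1)^p"
    using assms(1) by (auto simp: poly_bounded_def)
  have "summable (\<lambda>n. C * ((real n + 1)^p * \<bar>x\<bar>^n))"
    using assms(2) by (intro summable_mult summable_poly_times_geometric) auto
  then show ?thesis
  proof (rule summable_comparison_test'[where N = 0])
    fix n
    show "norm (c n * x^n) \<le> C * ((real n + 1)^p * \<bar>x\<bar>^n)"
      using mult_right_mono[OF Cp[of n], of "\<bar>x\<bar>^n"] by (simp add: abs_mult power_abs mult_ac)
  qed
qed

definition pseries :: "(nat \<Rightarrow> real) \<Rightarrow> real \<Rightarrow> real" where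
  "pseries c x = (\<Sum>n. c n * x^n)"

lemma pseries_at_0: "pseries c 0 = c 0"
  unfolding pseries_def by (rule powser_zero)

lemma pseries_sums:
  "poly_bounded c \<Longrightarrow> \<bar>x\<bar> < 1 \<Longrightarrow> (\<lambda>n. c n * x^n) sums pseries c x"
  unfolding pseries_def by (intro summable_sums summable_if_poly_bounded)

lemma has_field_derivative_pseries:
  assumes "poly_bounded c" "\<bar>x\<bar> < 1"
  shows "(pseries c has_field_derivative pseries (diffs c) x) (at x)"
  unfolding pseries_def
  by (rule termdiffs_strong'[of 1]) (use assms summable_if_poly_bounded in auto)

lemma pseries_second_order_sums:
  assumes "poly_bounded c" "\<bar>x\<bar> < 1"
  shows "(\<lambda>n. ((real n + 2) * (real n + 1) * c (n + 2) + (real n + 1)^2 * c n) * x^n) sums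
      ((1 + x^2) * pseries (diffs (diffs c)) x + 3 * x * pseries (diffs c) x + pseries c x)"
proof -
  have c': "poly_bounded (diffs c)"
    using assms(1) by (rule poly_bounded_diffs)
  then have c'': "poly_bounded (diffs (diffs c))"
    by (rule poly_bounded_diffs)
  have "(\<lambda>n. real (Suc n) * c (Suc n) * x^Suc n) sums (x * pseries (diffs c) x)"
    using sums_mult[OF pseries_sums[OF c' assms(2)], of x] by (simp add: diffs_def mult_ac)
  then have s1: "(\<lambda>n. real n * c n * x^n) sums (x * pseries (diffs c) x)"
    by (subst (asm) sums_Suc_iff) simp
  have "(\<lambda>n. real (Suc (Suc n)) * real (Suc n) * c (Suc (Suc n)) * x^Suc (Suc n))
      sums (x^2 * pseries (diffs (diffs c)) x)"
    using sums_mult[OF pseries_sums[OF c'' assms(2)], of "x^2"]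
    by (simp add: diffs_def power2_eq_square mult_ac)
  then have s2: "(\<lambda>n. real n * (real n - 1) * c n * x^n) sums (x^2 * pseries (diffs (diffs c)) x)"
    using sums_Suc_iff[of "\<lambda>n. real n * (real n - 1) * c n * x^n"]
      sums_Suc_iff[of "\<lambda>n. real (Suc n) * real n * c (Suc n) * x^Suc n"]
    by simp
  have "(\<lambda>n. diffs (diffs c) n * x^n + (real n * (real n - 1) * c n * x^n
       + (3 * (real n * c n * x^n) + c n * x^n))) sums
      (pseries (diffs (diffs c)) x + (x^2 * pseries (diffs (diffs c)) x
       + (3 * (x * pseries (diffs c) x) + pseries c x)))"
    by (intro sums_add sums_mult s1 s2 pseries_sums c'' assms)
  moreover have "diffs (diffs c) n * x^n + (real n * (real n - 1) * c n * x^n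
       + (3 * (real n * c n * x^n) + c n * x^n))
      = ((real n + 2) * (real n + 1) * c (n + 2) + (real n + 1)^2 * c n) * x^n" for n
  proof -
    have "diffs (diffs c) n = (real n + 2) * (real n + 1) * c (n + 2)"
      by (simp add: diffs_def algebra_simps)
    then show ?thesis
      by (simp add: power2_eq_square algebra_simps)
  qed
  moreover have "pseries (diffs (diffs c)) x + (x^2 * pseries (diffs (diffs c)) x
       + (3 * (x * pseries (diffs c) x) + pseries c x))
      = (1 + x^2) * pseries (diffs (diffs c)) x + 3 * x * pseries (diffs c) x + pseries c x"
    by (simp add: algebra_simps)
  ultimately show ?thesis
    by (simp only:)
qed

lemma has_field_derivative_0_unit_interval_imp_0:
  fixes g :: "real \<Rightarrow> real"
  assumes "\<And>x. \<bar>x\<bar> < 1 \<Longrightarrow> (g has_field_derivative 0) (at x)" and "g 0 = 0" and "\<bar>t\<bar> < 1"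
  shows "g t = 0"
proof -
  have "\<exists>K. \<forall>x\<in>{-1<..<1}. g x = K"
    using assms(1) by (intro has_field_derivative_zero_constant convex_real_interval)
      (auto simp: abs_less_iff has_field_derivative_at_within)
  then show ?thesis
    using assms(2,3) by (force simp: abs_less_iff)
qed

section \<open>The polynomials prod_{j<N} (x + N - 1 - 2 j)\<close>

definition arsinh_gen_poly :: "nat \<Rightarrow> real poly" where
  "arsinh_gen_poly N = (\<Prod>j<N. [: real N - 1 - 2 * real j, 1 :])"

lemma arsinh_gen_poly_Suc_Suc:
  "arsinh_gen_poly (Suc (Suc N)) = [: - ((real N + 1)^2), 0, 1 :] * arsinh_gen_poly N"
proof (rule poly_ext)
  fix a :: real
  have "poly (arsinh_gen_poly (Suc (Suc N))) a = (\<Prod>j<Suc (Suc N). a + (real N + 1 - 2 * real j))"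
    unfolding arsinh_gen_poly_def by (simp add: poly_prod algebra_simps)
  also have "\<dots> = (\<Prod>j<Suc N. a + (real N + 1 - 2 * real (Suc j))) * (a + (real N + 1))"
    by (subst prod.lessThan_Suc_shift) simp
  also have "\<dots> = (\<Prod>j<N. a + (real N + 1 - 2 * real (Suc j)))
      * (a - (real N + 1)) * (a + (real N + 1))"
    by (simp add: algebra_simps)
  also have "(\<Prod>j<N. a + (real N + 1 - 2 * real (Suc j))) = poly (arsinh_gen_poly N) a"
    unfolding arsinh_gen_poly_def by (simp add: poly_prod algebra_simps)
  finally show "poly (arsinh_gen_poly (Suc (Suc N))) a
      = poly ([: - ((real N + 1)^2), 0, 1 :] * arsinh_gen_poly N) a"
    by (simp add: algebra_simps power2_eq_square)
qed

(* Defined by the recursion of arsinh_gen_poly_Suc_Suc to obtain a two-step induction rule. *)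
fun arsinh_gen_coeff :: "nat \<Rightarrow> nat \<Rightarrow> real" where
  "arsinh_gen_coeff 0 m = (if m = 0 then 1 else 0)"
| "arsinh_gen_coeff (Suc 0) m = (if m = 1 then 1 else 0)"
| "arsinh_gen_coeff (Suc (Suc N)) m =
     (if 2 \<le> m then arsinh_gen_coeff N (m - 2) else 0) - (real N + 1)^2 * arsinh_gen_coeff N m"

lemma coeff_arsinh_gen_poly: "coeff (arsinh_gen_poly N) m = arsinh_gen_coeff N m"
proof (induction N m rule: arsinh_gen_coeff.induct)
  case (3 N m)
  have "[: - ((real N + 1)^2), 0, 1 :] * p = smult (- ((real N + 1)^2)) p + pCons 0 (pCons 0 p)"
    for p :: "real poly"
    by (simp add: algebra_simps)
  then show ?case
    using 3 by (auto simp: arsinh_gen_poly_Suc_Suc coeff_pCons split: nat.split)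
qed (auto simp: arsinh_gen_poly_def coeff_pCons split: nat.split)

lemma arsinh_gen_coeff_eq_0_if_less: "N < m \<Longrightarrow> arsinh_gen_coeff N m = 0"
  by (induction N m rule: arsinh_gen_coeff.induct) auto

lemma arsinh_gen_coeff_eq_0_if_odd: "odd (N + m) \<Longrightarrow> arsinh_gen_coeff N m = 0"
proof (induction N m rule: arsinh_gen_coeff.induct)
  case (3 N m)
  then show ?case
    by (cases "2 \<le> m") (auto simp: Suc_diff_le)
qed (auto simp: odd_pos)

lemma arsinh_gen_coeff_diag: "arsinh_gen_coeff N N = 1"
  by (induction N rule: induct_nat_012)
     (auto simp: arsinh_gen_coeff_eq_0_if_less)

lemma sum_stirling1s_power: "(\<Sum>k\<le>N. stirling1s N k * x ^ k) = (\<Prod>j<N. x - real j)"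
proof -
  have "stirling1s N k * x ^ k = (-1)^N * (real (stirling N k) * (-x) ^ k)" if "k \<le> N" for k
  proof -
    have "(-1::real)^(N - k) = (-1)^N * (-1)^k"
      using that by (auto simp: minus_one_power_iff even_add simp flip: power_add)
    then show ?thesis
      unfolding stirling1s_def power_minus[of x k] by (simp add: algebra_simps)
  qed
  then have "(\<Sum>k\<le>N. stirling1s N k * x ^ k) = (-1)^N * (\<Sum>k\<le>N. real (stirling N k) * (-x) ^ k)"
    by (simp add: sum_distrib_left)
  also have "\<dots> = (-1)^N * pochhammer (-x) N"
    by (simp only: stirling_pochhammer)
  also have "\<dots> = (\<Prod>j<N. (-1) * (real j - x))"
    by (simp only: prod.distrib prod_constant card_lessThan pochhammer_prod atLeast0LessThan) simp
  also have "\<dots> = (\<Prod>j<N. x - real j)"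
    by simp
  finally show ?thesis .
qed

lemma poly_arsinh_gen_poly:
  "poly (arsinh_gen_poly N) a = 2^N * (\<Prod>j<N. (a + real N - 1) / 2 - real j)"
proof -
  have "poly (arsinh_gen_poly N) a = (\<Prod>j<N. 2 * ((a + real N - 1) / 2 - real j))"
    unfolding arsinh_gen_poly_def poly_prod by (intro prod.cong) (auto simp: algebra_simps)
  then show ?thesis
    by (simp only: prod.distrib prod_constant card_lessThan)
qed

lemma arsinh_gen_poly_expand:
  "arsinh_gen_poly N = (\<Sum>j\<le>N. \<Sum>i\<le>j.
      monom (stirling1s N j * 2^(N - j) * real (j choose i) * (real N - 1)^(j - i)) i)"
proof (rule poly_ext)
  fix a :: real
  have "(\<Sum>j\<le>N. \<Sum>i\<le>j. stirling1s N j * 2^(N - j) * real (j choose i) * (real N - 1)^(j - i) * a^i)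
      = (\<Sum>j\<le>N. stirling1s N j * 2^(N - j) * (a + (real N - 1))^j)"
    by (simp add: binomial_ring sum_distrib_left mult_ac)
  also have "\<dots> = 2^N * (\<Sum>j\<le>N. stirling1s N j * ((a + real N - 1) / 2)^j)"
    unfolding sum_distrib_left
  proof (rule sum.cong)
    fix j assume "j \<in> {..N}"
    then have "(2::real)^N = 2^(N - j) * 2^j"
      by (simp flip: power_add)
    then show "stirling1s N j * 2^(N - j) * (a + (real N - 1))^j
        = 2^N * (stirling1s N j * ((a + real N - 1) / 2)^j)"
      by (simp add: power_divide field_simps)
  qed simp
  also have "\<dots> = poly (arsinh_gen_poly N) a"
    by (simp add: poly_arsinh_gen_poly sum_stirling1s_power)
  finally show "poly (arsinh_gen_poly N) a = poly (\<Sum>j\<le>N. \<Sum>i\<le>j.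
      monom (stirling1s N j * 2^(N - j) * real (j choose i) * (real N - 1)^(j - i)) i) a"
    by (simp add: poly_sum poly_monom)
qed

lemma arsinh_gen_coeff_stirling:
  "arsinh_gen_coeff N m =
     (\<Sum>j\<le>N. stirling1s N j * 2^(N - j) * real (j choose m) * (real N - 1)^(j - m))"
proof -
  have "arsinh_gen_coeff N m
      = (\<Sum>j\<le>N. if m \<le> j
          then stirling1s N j * 2^(N - j) * real (j choose m) * (real N - 1)^(j - m) else 0)"
    by (simp flip: coeff_arsinh_gen_poly add: arsinh_gen_poly_expand coeff_sum coeff_monom)
  then show ?thesis
    by (auto intro: sum.cong)
qed

lemma arsinh_gen_coeff_Qfun: "arsinh_gen_coeff (m + 2 * k) m = 4^k * Qfun (m + 1) (2 * k) 2"
proof -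
  define N where "N = m + 2 * k"
  define f where "f j = stirling1s N j * 2^(N - j) * real (j choose m) * (real N - 1)^(j - m)" for j
  have "arsinh_gen_coeff N m = (\<Sum>j\<in>{m..N}. f j)"
    unfolding arsinh_gen_coeff_stirling f_def by (rule sum.mono_neutral_right) auto
  also have "\<dots> = (\<Sum>l\<le>2 * k. f (m + l))"
    using sum.shift_bounds_cl_nat_ivl[of f 0 m "2 * k"]
    by (simp add: N_def atLeast0AtMost add.commute)
  also have "\<dots> = (\<Sum>l\<le>2 * k.
      4^k * (real ((m + l) choose m) * stirling1s N (m + l) * ((real N - 1) / 2)^l))"
  proof (rule sum.cong[OF refl])
    fix l assume "l \<in> {..2 * k}"
    then have "(4::real)^k = 2^(2 * k - l) * 2^l"
      by (simp add: power_mult flip: power_add)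
    moreover have "N - (m + l) = 2 * k - l"
      by (simp add: N_def)
    ultimately show "f (m + l)
        = 4^k * (real ((m + l) choose m) * stirling1s N (m + l) * ((real N - 1) / 2)^l)"
      unfolding f_def by (simp add: power_divide field_simps)
  qed
  also have "\<dots> = 4^k * Qfun (m + 1) (2 * k) 2"
    \<comment> \<open>with \<alpha> = 2 the base ((m + 1) + 2 k - \<alpha>) / 2 of Qfun is (N - 1) / 2\<close>
    by (simp add: Qfun_def N_def sum_distrib_left algebra_simps)
  finally show ?thesis
    by (simp add: N_def)
qed

section \<open>The power series of arsinh t ^ m / sqrt (1 + t^2)\<close>

definition arsinh_pow_coeff :: "nat \<Rightarrow> nat \<Rightarrow> real" where
  "arsinh_pow_coeff m N = fact m * arsinh_gen_coeff N m / fact N"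

lemma arsinh_pow_coeff_rec:
  "arsinh_pow_coeff m (Suc (Suc N)) * ((real N + 2) * (real N + 1)) =
     (if 2 \<le> m then real m * (real m - 1) * arsinh_pow_coeff (m - 2) N else 0)
     - (real N + 1)^2 * arsinh_pow_coeff m N"
proof -
  have "fact (Suc (Suc N)) = (real N + 2) * (real N + 1) * (fact N :: real)"
    by (simp add: algebra_simps)
  then have "arsinh_pow_coeff m (Suc (Suc N)) * ((real N + 2) * (real N + 1))
      = fact m * arsinh_gen_coeff (Suc (Suc N)) m / fact N"
    unfolding arsinh_pow_coeff_def by (simp add: divide_simps del: arsinh_gen_coeff.simps)
  also have "\<dots> = (if 2 \<le> m then real m * (real m - 1) * arsinh_pow_coeff (m - 2) N else 0)
      - (real N + 1)^2 * arsinh_pow_coeff m N"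
  proof (cases "2 \<le> m")
    case True
    then obtain i where "m = Suc (Suc i)"
      by (metis add_2_eq_Suc le_Suc_ex)
    then show ?thesis
      by (simp add: arsinh_pow_coeff_def field_simps)
  qed (simp add: arsinh_pow_coeff_def field_simps)
  finally show ?thesis .
qed

lemma power_pred_le_power_add_2_diff:
  fixes X :: real
  assumes "X \<ge> 1" and "m > 0"
  shows "X^(m - 1) \<le> (X + 2)^m - X^m"
proof -
  have "X^m + X^(m - 1) = (X + 1) * X^(m - 1)"
    using assms(2) by (cases m) (simp_all add: algebra_simps)
  also have "\<dots> \<le> (X + 2) * (X + 2)^(m - 1)"
    using assms(1) by (intro mult_mono power_mono) auto
  also have "\<dots> = (X + 2)^m"
    using assms(2) by (cases m) simp_all
  finally show ?thesis
    by simp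
qed

lemma abs_arsinh_pow_coeff_le: "\<bar>arsinh_pow_coeff m N\<bar> \<le> fact m * (real N + 1)^m"
proof (induction N m rule: arsinh_gen_coeff.induct)
  case (3 N m)
  define X where "X = real N + 1"
  define D where "D = (real N + 2) * (real N + 1)"
  define r where "r = (if 2 \<le> m then real m * (real m - 1) * arsinh_pow_coeff (m - 2) N else 0)"
  have "X \<ge> 1" "X^2 \<le> D"
    by (simp_all add: X_def D_def power2_eq_square)
  then have "D \<ge> 1"
    using one_le_power[of X 2] by linarith
  have "X^m \<le> (X + 2)^m"
    using \<open>X \<ge> 1\<close> by (intro power_mono) auto
  have r_le: "\<bar>r\<bar> \<le> fact m * ((X + 2)^m - X^m)"
  proof (cases "2 \<le> m")
    case True
    then obtain i where i: "m = Suc (Suc i)"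
      by (metis add_2_eq_Suc le_Suc_ex)
    have "\<bar>r\<bar> \<le> real m * (real m - 1) * (fact i * X^i)"
      using 3(1) True i by (auto simp: r_def X_def abs_mult intro!: mult_left_mono)
    also have "\<dots> = fact m * X^(m - 2)"
      using i by (simp add: algebra_simps)
    also have "\<dots> \<le> fact m * X^(m - 1)"
      using \<open>X \<ge> 1\<close> by (intro mult_left_mono power_increasing) auto
    also have "\<dots> \<le> fact m * ((X + 2)^m - X^m)"
      using \<open>X \<ge> 1\<close> True by (intro mult_left_mono power_pred_le_power_add_2_diff) auto
    finally show ?thesis .
  qed (use \<open>X^m \<le> (X + 2)^m\<close> in \<open>simp add: r_def\<close>)
  have "\<bar>arsinh_pow_coeff m (Suc (Suc N))\<bar> * D = \<bar>arsinh_pow_coeff m (Suc (Suc N)) * D\<bar>"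
    using \<open>D \<ge> 1\<close> by (simp add: abs_mult)
  also have "\<dots> = \<bar>r - X^2 * arsinh_pow_coeff m N\<bar>"
    unfolding arsinh_pow_coeff_rec r_def D_def X_def ..
  also have "\<dots> \<le> \<bar>r\<bar> + X^2 * \<bar>arsinh_pow_coeff m N\<bar>"
    using abs_triangle_ineq4[of r "X^2 * arsinh_pow_coeff m N"] by (simp add: abs_mult)
  also have "\<dots> \<le> fact m * ((X + 2)^m - X^m) + D * (fact m * X^m)"
    using r_le 3(2) \<open>X^2 \<le> D\<close> \<open>D \<ge> 1\<close> by (intro add_mono mult_mono) (auto simp: X_def)
  also have "\<dots> \<le> D * (fact m * (X + 2)^m)"
    using mult_right_mono[OF \<open>D \<ge> 1\<close>, of "fact m * ((X + 2)^m - X^m)"] \<open>X^m \<le> (X + 2)^m\<close>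
    by (simp add: algebra_simps)
  finally show ?case
    using \<open>D \<ge> 1\<close> by (simp add: X_def algebra_simps)
qed (simp_all add: arsinh_pow_coeff_def)

lemma poly_bounded_arsinh_pow_coeff: "poly_bounded (arsinh_pow_coeff m)"
  unfolding poly_bounded_def using abs_arsinh_pow_coeff_le by blast

lemma arsinh_pow_coeff_ode:
  assumes "\<bar>x\<bar> < 1"
  shows "(1 + x^2) * pseries (diffs (diffs (arsinh_pow_coeff m))) x
      + 3 * x * pseries (diffs (arsinh_pow_coeff m)) x + pseries (arsinh_pow_coeff m) x
    = (if 2 \<le> m then real m * (real m - 1) * pseries (arsinh_pow_coeff (m - 2)) x else 0)"
proof (rule sums_unique2[OF pseries_second_order_sums[OF poly_bounded_arsinh_pow_coeff assms]])
  have "(real n + 2) * (real n + 1) * arsinh_pow_coeff m (n + 2)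
      + (real n + 1)^2 * arsinh_pow_coeff m n
      = (if 2 \<le> m then real m * (real m - 1) * arsinh_pow_coeff (m - 2) n else 0)" for n
    using arsinh_pow_coeff_rec[of m n] by (simp add: mult.commute)
  moreover have "(\<lambda>n. (if 2 \<le> m then real m * (real m - 1) * arsinh_pow_coeff (m - 2) n else 0)
      * x^n)
      sums (if 2 \<le> m then real m * (real m - 1) * pseries (arsinh_pow_coeff (m - 2)) x else 0)"
    using sums_mult[OF pseries_sums[OF poly_bounded_arsinh_pow_coeff assms],
        of "real m * (real m - 1)"]
    by (cases "2 \<le> m") (simp_all add: mult.assoc)
  ultimately show "(\<lambda>n. ((real n + 2) * (real n + 1) * arsinh_pow_coeff m (n + 2)
      + (real n + 1)^2 * arsinh_pow_coeff m n) * x^n)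
      sums (if 2 \<le> m then real m * (real m - 1) * pseries (arsinh_pow_coeff (m - 2)) x else 0)"
    by simp
qed

lemma pseries_eq_arsinh_pow_div_sqrt:
  assumes c: "poly_bounded c" and c0: "c 0 = 0 ^ m"
    and first_integral: "\<And>x. \<bar>x\<bar> < 1 \<Longrightarrow>
      (1 + x^2) * pseries (diffs c) x + x * pseries c x = real m * arsinh x ^ (m - 1)"
    and t: "\<bar>t\<bar> < 1"
  shows "pseries c t = arsinh t ^ m / sqrt (1 + t^2)"
proof -
  define \<Psi> where "\<Psi> x = sqrt (1 + x^2) * pseries c x - arsinh x ^ m" for x
  have "\<Psi> t = 0"
  proof (rule has_field_derivative_0_unit_interval_imp_0[OF _ _ t])
    fix x :: real
    assume x: "\<bar>x\<bar> < 1"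
    have "1 + x^2 > 0"
      by (simp add: add_pos_nonneg)
    then have "1 + x^2 \<noteq> 0" "\<not> 1 + x^2 < 0"
      by auto
    then have "(\<Psi> has_field_derivative (x / sqrt (1 + x^2) * pseries c x
        + sqrt (1 + x^2) * pseries (diffs c) x - real m * arsinh x ^ (m - 1) / sqrt (1 + x^2)))
        (at x)"
      unfolding \<Psi>_def
      by (auto intro!: derivative_eq_intros has_field_derivative_pseries c x
          simp: add.commute field_simps add_pos_nonneg)
    also have "x / sqrt (1 + x^2) * pseries c x + sqrt (1 + x^2) * pseries (diffs c) x
        - real m * arsinh x ^ (m - 1) / sqrt (1 + x^2)
      = ((1 + x^2) * pseries (diffs c) x + x * pseries c x - real m * arsinh x ^ (m - 1))
        / sqrt (1 + x^2)"
      using \<open>1 + x^2 > 0\<close> by (simp add: field_simps)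
    finally show "(\<Psi> has_field_derivative 0) (at x)"
      using first_integral[OF x] by simp
  qed (simp add: \<Psi>_def pseries_at_0 c0)
  moreover have "sqrt (1 + t^2) > 0"
    by (simp add: add_pos_nonneg)
  ultimately show ?thesis
    by (simp add: \<Psi>_def field_simps)
qed

lemma arsinh_pow_coeff_first_integral:
  assumes IH: "\<And>y. 2 \<le> m \<Longrightarrow> \<bar>y\<bar> < 1 \<Longrightarrow>
      pseries (arsinh_pow_coeff (m - 2)) y = arsinh y ^ (m - 2) / sqrt (1 + y^2)"
    and t: "\<bar>t\<bar> < 1"
  shows "(1 + t^2) * pseries (diffs (arsinh_pow_coeff m)) t + t * pseries (arsinh_pow_coeff m) t
      = real m * arsinh t ^ (m - 1)"
proof -
  define c where "c = arsinh_pow_coeff m"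
  have c: "poly_bounded c" "poly_bounded (diffs c)"
    unfolding c_def by (intro poly_bounded_diffs poly_bounded_arsinh_pow_coeff)+
  define \<Phi> where
    "\<Phi> x = (1 + x^2) * pseries (diffs c) x + x * pseries c x - real m * arsinh x ^ (m - 1)" for x
  have "\<Phi> t = 0"
  proof (rule has_field_derivative_0_unit_interval_imp_0[OF _ _ t])
    fix x :: real
    assume x: "\<bar>x\<bar> < 1"
    have "2 * x * pseries (diffs c) x + (1 + x^2) * pseries (diffs (diffs c)) x
        + (pseries c x + x * pseries (diffs c) x)
        - real m * (real (m - 1) * arsinh x ^ (m - 1 - 1) / sqrt (1 + x^2)) = 0"
    proof (cases "2 \<le> m")
      case True
      moreover have "real (m - 1) = real m - 1" "m - 1 - 1 = m - 2"
        using True by auto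
      ultimately show ?thesis
        using arsinh_pow_coeff_ode[OF x, of m] IH[OF True x] by (simp add: c_def algebra_simps)
    next
      case False
      then have "real m * real (m - 1) = 0"
        by (cases m) auto
      then show ?thesis
        using arsinh_pow_coeff_ode[OF x, of m] False by (simp add: c_def algebra_simps)
    qed
    then show "(\<Phi> has_field_derivative 0) (at x)"
      unfolding \<Phi>_def
      by (auto intro!: derivative_eq_intros has_field_derivative_pseries c x poly_bounded_diffs
          simp: add.commute field_simps elim!: DERIV_cong)
  next
    show "\<Phi> 0 = 0"
      by (cases "m = 0"; cases "m = 1")
        (auto simp: \<Phi>_def pseries_at_0 diffs_def c_def arsinh_pow_coeff_def)
  qed
  then show ?thesis
    by (simp add: \<Phi>_def c_def)
qed

lemma pseries_arsinh_pow_coeff: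
  "\<bar>t\<bar> < 1 \<Longrightarrow> pseries (arsinh_pow_coeff m) t = arsinh t ^ m / sqrt (1 + t^2)"
proof (induction m arbitrary: t rule: less_induct)
  case (less m)
  show ?case
  proof (rule pseries_eq_arsinh_pow_div_sqrt[OF poly_bounded_arsinh_pow_coeff _ _ less.prems])
    show "arsinh_pow_coeff m 0 = 0 ^ m"
      by (simp add: arsinh_pow_coeff_def)
    show "(1 + x^2) * pseries (diffs (arsinh_pow_coeff m)) x + x * pseries (arsinh_pow_coeff m) x
        = real m * arsinh x ^ (m - 1)" if "\<bar>x\<bar> < 1" for x
      using less.IH that by (intro arsinh_pow_coeff_first_integral) auto
  qed
qed

lemma arsinh_pow_coeff_eq_0:
  assumes "N \<notin> range (\<lambda>k. m + 2 * k)"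
  shows "arsinh_pow_coeff m N = 0"
proof -
  have "N < m \<or> odd (N + m)"
    using assms by (auto simp: not_less elim!: evenE dest!: le_Suc_ex)
  then show ?thesis
    by (auto simp: arsinh_pow_coeff_def arsinh_gen_coeff_eq_0_if_less arsinh_gen_coeff_eq_0_if_odd)
qed

lemma arsinh_pow_coeff_Qfun:
  "arsinh_pow_coeff m (m + 2 * k) =
     Qfun (m + 1) (2 * k) 2 / real ((m + 2 * k) choose m) * 2 ^ (2 * k) / fact (2 * k)"
proof -
  have "real ((m + 2 * k) choose m) = fact (m + 2 * k) / (fact m * fact (2 * k))"
    using binomial_fact[of m "m + 2 * k"] by simp
  moreover have "(2::real) ^ (2 * k) = 4 ^ k"
    by (simp add: power_mult)
  ultimately show ?thesis
    unfolding arsinh_pow_coeff_def arsinh_gen_coeff_Qfun by (simp add: field_simps)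
qed

lemma arsinh_pow_coeff_diag: "arsinh_pow_coeff m m = 1"
  by (simp add: arsinh_pow_coeff_def arsinh_gen_coeff_diag)

lemma arsinh_pow_div_sqrt_sums:
  assumes "\<bar>t\<bar> < 1"
  shows "(\<lambda>k. arsinh_pow_coeff m (m + 2 * k) * t ^ (m + 2 * k))
      sums (arsinh t ^ m / sqrt (1 + t^2))"
proof -
  have "(\<lambda>N. arsinh_pow_coeff m N * t ^ N) sums (arsinh t ^ m / sqrt (1 + t^2))"
    using pseries_sums[OF poly_bounded_arsinh_pow_coeff assms] pseries_arsinh_pow_coeff[OF assms]
    by simp
  moreover have "strict_mono (\<lambda>k::nat. m + 2 * k)"
    by (rule strict_monoI) simp
  ultimately show ?thesis
    using sums_mono_reindex[of "\<lambda>k. m + 2 * k" "\<lambda>N. arsinh_pow_coeff m N * t ^ N"]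
      arsinh_pow_coeff_eq_0
    by (simp add: o_def)
qed

lemma arsinh_pow_div_sqrt_tail_sums:
  assumes "\<bar>t\<bar> < 1"
  shows "(\<lambda>k. t ^ m * (Qfun (m + 1) (2 * (k + 1)) 2 / real ((m + 2 * (k + 1)) choose m)
      * (2 * t) ^ (2 * (k + 1)) / fact (2 * (k + 1)))) sums (arsinh t ^ m / sqrt (1 + t^2) - t ^ m)"
proof -
  define a where "a k = arsinh_pow_coeff m (m + 2 * k) * t ^ (m + 2 * k)" for k
  have "a 0 = t ^ m"
    by (simp add: a_def arsinh_pow_coeff_diag)
  moreover have "a (Suc k)
      = t ^ m * (Qfun (m + 1) (2 * (k + 1)) 2 / real ((m + 2 * (k + 1)) choose m)
        * (2 * t) ^ (2 * (k + 1)) / fact (2 * (k + 1)))" for k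
    using arsinh_pow_coeff_Qfun[of m "Suc k"] by (simp add: a_def power_add power_mult_distrib)
  ultimately show ?thesis
    using arsinh_pow_div_sqrt_sums[OF assms, of m, folded a_def]
      sums_Suc_iff[of a "arsinh t ^ m / sqrt (1 + t^2) - a 0"]
    by simp
qed

theorem mainTheorem13:
  fixes m :: nat and t :: real
  assumes "\<bar>t\<bar> < 1"
  shows "summable (\<lambda>k. Qfun (m + 1) (2 * (k + 1)) 2 / real ((m + 2 * (k + 1)) choose m)
            * (2 * t) ^ (2 * (k + 1)) / fact (2 * (k + 1))) \<and>
         arsinh t ^ m / sqrt (1 + t\<^sup>2) =
           t ^ m * (1 + (\<Sum>k. Qfun (m + 1) (2 * (k + 1)) 2 / real ((m + 2 * (k + 1)) choose m)
            * (2 * t) ^ (2 * (k + 1)) / fact (2 * (k + 1))))"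
proof -
  define T where "T k = Qfun (m + 1) (2 * (k + 1)) 2 / real ((m + 2 * (k + 1)) choose m)
            * (2 * t) ^ (2 * (k + 1)) / fact (2 * (k + 1))" for k
  define V where "V = arsinh t ^ m / sqrt (1 + t\<^sup>2)"
  have tail: "(\<lambda>k. t ^ m * T k) sums (V - t ^ m)"
    unfolding T_def V_def by (rule arsinh_pow_div_sqrt_tail_sums[OF assms])
  have "summable T \<and> V = t ^ m * (1 + (\<Sum>k. T k))"
  proof (cases "t = 0")
    case True
    then have "T = (\<lambda>_. 0)"
      by (simp add: T_def fun_eq_iff)
    then show ?thesis
      using True by (simp add: V_def)
  next
    case False
    then have "T sums ((V - t ^ m) / t ^ m)"
      using sums_divide[OF tail, of "t ^ m"] by simp
    then show ?thesis
      using False by (simp add: sums_iff field_simps)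
  qed
  then show ?thesis
    unfolding T_def V_def .
qed

end
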